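(* Let $n\ge1$, $0<\lambda<1$, $p>1$, let $w$ be a non-negative locally integrable function on $\mathbb{R}^n$ and $f$ measurable. For every cube $Q\in\mathcal{Q}$ with center $c_Q$ and every $N\in\mathbb{N}$, $$\frac{1}{|Q|^{\lambda}}\int_Q|f|^pw\le C\sup_{R\in\mathcal{F}_N}\frac{1}{|R|^{\lambda}}\int_R|f|^pw,$$ where $$\mathcal{F}_N=\Big\{R\in\mathcal{Q}: R\subset Q,\ \frac{N}{\sqrt n}\,\mathrm{diam}\,R\le \mathrm{dist}(R,c_Q)\le N\,\mathrm{diam}\,R\Big\}$$ and the constant $C$ depends only on $\lambda$, $N$ and $n$.
   Context: $\mathcal{Q}$ denotes the family of all cubes in $\mathbb{R}^n$ with sides parallel to the axes; $\mathrm{dist}(R,c_Q)$ is the distance from the point $c_Q$ to the set $R$. *)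

theory Defs
  imports "HOL-Analysis.Analysis"
begin

definition cube :: "'a::euclidean_space \<Rightarrow> real \<Rightarrow> 'a set" where
  "cube c r = cbox (c - r *\<^sub>R One) (c + r *\<^sub>R One)"

definition is_cube :: "'a::euclidean_space set \<Rightarrow> bool" where
  "is_cube R \<longleftrightarrow> (\<exists>c r. r > 0 \<and> R = cube c r)"

definition locally_integrable :: "('a::euclidean_space \<Rightarrow> real) \<Rightarrow> bool" where
  "locally_integrable w \<longleftrightarrow> (\<forall>K. compact K \<longrightarrow> set_integrable lebesgue K w)"

definition F_fam :: "nat \<Rightarrow> 'a::euclidean_space set \<Rightarrow> 'a \<Rightarrow> 'a set set" where
  "F_fam N Q c = {R. is_cube R \<and> R \<subseteq> Q \<and>
      real N / sqrt (real DIM('a)) * diameter R \<le> infdist c R \<and>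
      infdist c R \<le> real N * diameter R}"

definition morrey_avg :: "real \<Rightarrow> real \<Rightarrow> ('a::euclidean_space \<Rightarrow> real) \<Rightarrow> ('a \<Rightarrow> real) \<Rightarrow> 'a set \<Rightarrow> ennreal" where
  "morrey_avg lam p f w R =
     ennreal (1 / (measure lebesgue R powr lam)) *
     (\<integral>\<^sup>+ x \<in> R. ennreal (\<bar>f x\<bar> powr p * w x) \<partial>lebesgue)"

end

theory Submission
  imports Defs
begin

text \<open>
  Put \<open>q = N / (N + 1)\<close> and \<open>s\<^sub>k = r q\<^sup>k / (N + 1)\<close>. The punctured cube \<open>Q = cube c r\<close> is the
  union of the sup-norm shells \<open>N s\<^sub>k < \<parallel>x - c\<parallel>\<^sub>\<infinity> \<le> (N + 1) s\<^sub>k\<close>, \<open>k \<ge> 0\<close>, and the \<open>k\<close>-th shell is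
  covered by at most \<open>(2N + 2)\<^sup>n\<close> cubes of side \<open>s\<^sub>k\<close> of the lattice \<open>c + s\<^sub>k \<int>\<^sup>n\<close>. Each such cube
  \<open>R\<close> has diameter \<open>\<surd>n s\<^sub>k\<close> and distance between \<open>N s\<^sub>k\<close> and \<open>\<surd>n N s\<^sub>k\<close> from \<open>c\<close>, so it belongs to
  \<open>F\<^sub>N\<close>, and \<open>\<integral>\<^sub>R |f|\<^sup>p w \<le> s\<^sub>k\<^bsup>n\<lambda>\<^esup> M\<close> with \<open>M\<close> the supremum over \<open>F\<^sub>N\<close>. Summing the
  geometric series in \<open>q\<^bsup>n\<lambda>\<^esup>\<close> and dividing by \<open>|Q|\<^sup>\<lambda> = (2r)\<^bsup>n\<lambda>\<^esup>\<close> gives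
  \<open>C = (2N + 2)\<^bsup>n(1-\<lambda>)\<^esup> / (1 - q\<^bsup>n\<lambda>\<^esup>)\<close>. For \<open>N = 0\<close> the cube \<open>Q\<close> itself lies in \<open>F\<^sub>0\<close>.
\<close>

lemma geometric_shell:
  fixes q a d :: real
  assumes q: "0 < q" "q < 1" and d: "0 < d" "d \<le> a"
  shows "\<exists>k. a * q ^ Suc k < d \<and> d \<le> a * q ^ k"
proof -
  have a: "a > 0"
    using d by linarith
  obtain n where "q ^ n < d / a"
    using real_arch_pow_inv[of "d / a" q] a d q by auto
  then have "a * q ^ n < d"
    using a by (simp add: pos_less_divide_eq mult.commute)
  moreover have "a * q ^ Suc n \<le> a * q ^ n"
    using a q by (intro mult_left_mono power_decreasing) auto
  ultimately have "a * q ^ Suc n < d"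
    by linarith
  then obtain k where k: "a * q ^ Suc k < d" and least: "\<forall>m<k. \<not> a * q ^ Suc m < d"
    using exists_least_iff[of "\<lambda>k. a * q ^ Suc k < d"] by blast
  have "d \<le> a * q ^ k"
  proof (cases k)
    case 0
    then show ?thesis
      using d by simp
  next
    case (Suc m)
    then show ?thesis
      using least by auto
  qed
  with k show ?thesis
    by blast
qed

lemma suminf_ennreal_geometric:
  fixes a t :: real
  assumes "0 \<le> a" "0 \<le> t" "t < 1"
  shows "(\<Sum>k. ennreal (a * t ^ k)) = ennreal (a / (1 - t))"
proof (rule suminf_ennreal_eq)
  show "(\<lambda>k. a * t ^ k) sums (a / (1 - t))"
    using sums_mult[OF geometric_sums[of t], of a] assms by simp
qed (use assms in simp)

lemma locally_integrable_borel_measurable: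
  assumes "locally_integrable w"
  shows "w \<in> borel_measurable lebesgue"
proof (rule borel_measurable_LIMSEQ_real[where u = "\<lambda>i x. indicator (cball 0 (real i)) x *\<^sub>R w x"])
  fix i :: nat
  have "set_integrable lebesgue (cball 0 (real i)) w"
    using assms by (simp add: locally_integrable_def)
  then show "(\<lambda>x. indicator (cball 0 (real i)) x *\<^sub>R w x) \<in> borel_measurable lebesgue"
    unfolding set_integrable_def by (rule borel_measurable_integrable)
next
  fix x :: 'a
  obtain i0 :: nat where "norm x \<le> real i0"
    using real_arch_simple by blast
  then have "\<forall>\<^sub>F i in sequentially. indicator (cball 0 (real i)) x *\<^sub>R w x = w x"
    unfolding eventually_sequentially by (auto intro!: exI[of _ i0])
  then show "(\<lambda>i. indicator (cball 0 (real i)) x *\<^sub>R w x) \<longlonglongrightarrow> w x"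
    by (rule tendsto_eventually)
qed

lemma set_nn_integral_le_suminf_cover:
  fixes g :: "'a \<Rightarrow> ennreal" and R :: "nat \<Rightarrow> 'b \<Rightarrow> 'a set"
  assumes g: "g \<in> borel_measurable M" and R: "\<And>k j. R k j \<in> sets M" and J: "finite J"
    and cover: "AE x in M. x \<in> Q \<longrightarrow> (\<exists>k. \<exists>j\<in>J. x \<in> R k j)"
  shows "(\<integral>\<^sup>+x\<in>Q. g x \<partial>M) \<le> (\<Sum>k. \<Sum>j\<in>J. \<integral>\<^sup>+x\<in>R k j. g x \<partial>M)"
proof -
  have meas: "(\<lambda>x. g x * indicator (R k j) x) \<in> borel_measurable M" for k j
    by (intro borel_measurable_times_ennreal g borel_measurable_indicator R)
  have "(\<integral>\<^sup>+x\<in>Q. g x \<partial>M) \<le> (\<integral>\<^sup>+x. (\<Sum>k. \<Sum>j\<in>J. g x * indicator (R k j) x) \<partial>M)"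
  proof (rule nn_integral_mono_AE, use cover in \<open>rule eventually_mono\<close>)
    fix x assume x: "x \<in> Q \<longrightarrow> (\<exists>k. \<exists>j\<in>J. x \<in> R k j)"
    show "g x * indicator Q x \<le> (\<Sum>k. \<Sum>j\<in>J. g x * indicator (R k j) x)"
    proof (cases "x \<in> Q")
      case True
      then obtain k j where "j \<in> J" "x \<in> R k j"
        using x by blast
      then have "g x * indicator Q x = g x * indicator (R k j) x"
        using True by simp
      also have "\<dots> \<le> (\<Sum>j\<in>J. g x * indicator (R k j) x)"
        by (rule member_le_sum) (use \<open>j \<in> J\<close> J in auto)
      also have "\<dots> \<le> (\<Sum>k. \<Sum>j\<in>J. g x * indicator (R k j) x)"
        using sum_le_suminf[of "\<lambda>k. \<Sum>j\<in>J. g x * indicator (R k j) x" "{k}"] by simp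
      finally show ?thesis .
    qed simp
  qed
  also have "\<dots> = (\<Sum>k. \<integral>\<^sup>+x. (\<Sum>j\<in>J. g x * indicator (R k j) x) \<partial>M)"
    using meas J by (intro nn_integral_suminf borel_measurable_sum) auto
  also have "\<dots> = (\<Sum>k. \<Sum>j\<in>J. \<integral>\<^sup>+x\<in>R k j. g x \<partial>M)"
    using meas by (intro suminf_cong nn_integral_sum) auto
  finally show ?thesis .
qed

lemma inner_sum_Basis_scaleR:
  "b \<in> Basis \<Longrightarrow> (\<Sum>i\<in>Basis. g i *\<^sub>R i) \<bullet> b = g b"
  by (simp add: inner_sum_left inner_Basis if_distrib cong: if_cong)

lemma norm_One: "norm (One::'a::euclidean_space) = sqrt DIM('a)"
  by (simp add: norm_eq_sqrt_inner inner_sum_left inner_sum_right inner_Basis sum.delta)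

lemma mem_cube:
  "x \<in> cube c r \<longleftrightarrow> (\<forall>b\<in>(Basis::'a::euclidean_space set). \<bar>(x - c) \<bullet> b\<bar> \<le> r)"
  by (auto simp: cube_def mem_box inner_diff_left inner_add_left abs_le_iff algebra_simps)

lemma centre_in_cube: "r \<ge> 0 \<Longrightarrow> c \<in> cube c r"
  by (simp add: mem_cube)

lemma measure_cube:
  assumes "r > 0"
  shows "measure lebesgue (cube (c::'a::euclidean_space) r) = (2 * r) ^ DIM('a)"
  using assms by (simp add: cube_def measure_lborel_cbox_eq inner_diff_left inner_add_left algebra_simps)

lemma diameter_cube:
  assumes "r > 0"
  shows "diameter (cube (c::'a::euclidean_space) r) = 2 * r * sqrt DIM('a)"
proof -
  have "diameter (cube c r) = dist (c - r *\<^sub>R One) (c + r *\<^sub>R One)"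
    unfolding cube_def using assms by (intro diameter_cbox) (auto simp: inner_diff_left inner_add_left)
  also have "\<dots> = norm ((2 * r) *\<^sub>R (One::'a))"
    by (simp add: dist_norm norm_minus_commute algebra_simps flip: scaleR_2)
  finally show ?thesis
    using assms by (simp add: norm_One)
qed

definition grid_cell :: "'a::euclidean_space \<Rightarrow> real \<Rightarrow> ('a \<Rightarrow> int) \<Rightarrow> 'a set" where
  "grid_cell c s j = cube (c + (\<Sum>b\<in>Basis. (s * (of_int (j b) + 1/2)) *\<^sub>R b)) (s / 2)"

lemma mem_grid_cell:
  assumes "s > 0"
  shows "x \<in> grid_cell c s j \<longleftrightarrow>
    (\<forall>b\<in>Basis. s * of_int (j b) \<le> (x - c) \<bullet> b \<and> (x - c) \<bullet> b \<le> s * (of_int (j b) + 1))"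
proof -
  let ?e = "c + (\<Sum>i\<in>Basis. (s * (of_int (j i) + 1/2)) *\<^sub>R i)"
  have "\<bar>(x - ?e) \<bullet> b\<bar> \<le> s / 2 \<longleftrightarrow>
      s * of_int (j b) \<le> (x - c) \<bullet> b \<and> (x - c) \<bullet> b \<le> s * (of_int (j b) + 1)"
    if "b \<in> Basis" for b
  proof -
    have "(x - ?e) \<bullet> b = (x - c) \<bullet> b - s * of_int (j b) - s / 2"
      using that by (simp add: inner_diff_left inner_add_left inner_sum_Basis_scaleR ring_distribs)
    then show ?thesis
      unfolding abs_le_iff by (auto simp: ring_distribs)
  qed
  then show ?thesis
    unfolding grid_cell_def mem_cube by blast
qed

lemma measure_grid_cell:
  "s > 0 \<Longrightarrow> measure lebesgue (grid_cell (c::'a::euclidean_space) s j) = s ^ DIM('a)"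
  by (simp add: grid_cell_def measure_cube)

lemma grid_cell_nonempty: "s > 0 \<Longrightarrow> grid_cell c s j \<noteq> {}"
  using centre_in_cube[of "s / 2"] unfolding grid_cell_def by force

lemma grid_cell_subset_cube:
  assumes s: "s > 0" and j: "j \<in> Basis \<rightarrow>\<^sub>E {-(int N + 1)..int N}" and r: "(real N + 1) * s \<le> r"
  shows "grid_cell c s j \<subseteq> cube c r"
proof
  fix y assume y: "y \<in> grid_cell c s j"
  have "\<bar>(y - c) \<bullet> b\<bar> \<le> r" if b: "b \<in> Basis" for b
  proof -
    have "- (real N + 1) \<le> of_int (j b)" "of_int (j b) + 1 \<le> real N + 1"
      using j b by (auto simp: PiE_iff)
    then have "s * - (real N + 1) \<le> s * of_int (j b)" "s * (of_int (j b) + 1) \<le> s * (real N + 1)"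
      using s by (auto intro: mult_left_mono)
    moreover have "s * of_int (j b) \<le> (y - c) \<bullet> b" "(y - c) \<bullet> b \<le> s * (of_int (j b) + 1)"
      using y b s by (auto simp: mem_grid_cell)
    ultimately show ?thesis
      using r by (auto simp: abs_le_iff algebra_simps)
  qed
  then show "y \<in> cube c r"
    by (simp add: mem_cube)
qed

lemma infdist_grid_cell_ge:
  assumes s: "s > 0" and b: "b \<in> Basis" and jb: "j b = int N \<or> j b = -(int N + 1)"
  shows "real N * s \<le> infdist c (grid_cell c s j)"
  unfolding infdist_notempty[OF grid_cell_nonempty[OF s]]
proof (rule cINF_greatest[OF grid_cell_nonempty[OF s]])
  fix y assume "y \<in> grid_cell c s j"
  then have y: "s * of_int (j b) \<le> (y - c) \<bullet> b" "(y - c) \<bullet> b \<le> s * (of_int (j b) + 1)"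
    using b s by (auto simp: mem_grid_cell)
  have "real N * s \<le> \<bar>(y - c) \<bullet> b\<bar>"
    using jb
  proof
    assume "j b = int N"
    then show ?thesis
      using y by (simp add: mult.commute)
  next
    assume "j b = -(int N + 1)"
    then have "(y - c) \<bullet> b \<le> - (s * real N)"
      using y by simp
    then show ?thesis
      by (simp add: mult.commute)
  qed
  also have "\<dots> \<le> norm (y - c)"
    using b by (rule Basis_le_norm)
  finally show "real N * s \<le> dist c y"
    by (simp add: dist_norm norm_minus_commute)
qed

lemma infdist_grid_cell_le:
  fixes c :: "'a::euclidean_space"
  assumes s: "s > 0" and j: "j \<in> Basis \<rightarrow>\<^sub>E {-(int N + 1)..int N}"
  shows "infdist c (grid_cell c s j) \<le> sqrt DIM('a) * (real N * s)"
proof -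
  \<comment> \<open>\<open>y\<close> is the corner of the cell nearest to \<open>c\<close>\<close>
  define t where "t b = s * (if j b \<ge> 0 then of_int (j b) else of_int (j b) + 1)" for b
  define y where "y = c + (\<Sum>b\<in>Basis. t b *\<^sub>R b)"
  have yc: "(y - c) \<bullet> b = t b" if "b \<in> Basis" for b
    unfolding y_def using that by (simp add: inner_sum_Basis_scaleR)
  have "y \<in> grid_cell c s j"
    using s by (auto simp: mem_grid_cell yc t_def)
  moreover have "infnorm (y - c) \<le> real N * s"
  proof -
    have "\<bar>t b\<bar> \<le> real N * s" if "b \<in> Basis" for b
    proof -
      have "- (int N + 1) \<le> j b" "j b \<le> int N"
        using j that by (auto simp: PiE_iff)
      then have "\<bar>if j b \<ge> 0 then of_int (j b) else of_int (j b) + 1\<bar> \<le> real N"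
        by auto
      then show ?thesis
        using s by (simp add: t_def abs_mult mult.commute mult_left_mono)
    qed
    then show ?thesis
      unfolding infnorm_Max by (auto simp: yc intro!: Max.boundedI)
  qed
  then have "norm (y - c) \<le> sqrt DIM('a) * (real N * s)"
    by (meson norm_le_infnorm mult_left_mono order_trans real_sqrt_ge_zero of_nat_0_le_iff)
  ultimately show ?thesis
    by (metis infdist_le2 dist_norm norm_minus_commute)
qed

text \<open>The cells \<open>grid_cell c s j\<close>, \<open>j \<in> shell_indices N\<close>, tile the sup-norm shell
  \<open>N s \<le> \<parallel>x - c\<parallel>\<^sub>\<infinity> \<le> (N + 1) s\<close>.\<close>
definition shell_indices :: "nat \<Rightarrow> ('a::euclidean_space \<Rightarrow> int) set" where
  "shell_indices N = {j \<in> Basis \<rightarrow>\<^sub>E {-(int N + 1)..int N}. \<exists>b\<in>Basis. j b = int N \<or> j b = -(int N + 1)}"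

lemma finite_shell_indices: "finite (shell_indices N)"
  unfolding shell_indices_def
  by (rule finite_subset[of _ "Basis \<rightarrow>\<^sub>E {-(int N + 1)..int N}"]) (blast, simp add: finite_PiE)

lemma card_shell_indices_le:
  "real (card (shell_indices N :: ('a::euclidean_space \<Rightarrow> int) set)) \<le> (2 * (real N + 1)) ^ DIM('a)"
proof -
  have "card (shell_indices N :: ('a \<Rightarrow> int) set) \<le> card (Basis \<rightarrow>\<^sub>E {-(int N + 1)..int N} :: ('a \<Rightarrow> int) set)"
    unfolding shell_indices_def by (rule card_mono) (auto simp: finite_PiE)
  also have "\<dots> = (2 * (N + 1)) ^ DIM('a)"
    by (simp add: card_PiE nat_add_distrib nat_mult_distrib)
  finally have "real (card (shell_indices N :: ('a \<Rightarrow> int) set)) \<le> real ((2 * (N + 1)) ^ DIM('a))"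
    by (rule of_nat_mono)
  then show ?thesis
    by (simp add: algebra_simps)
qed

lemma cube_in_F_fam_zero: "r > 0 \<Longrightarrow> cube c r \<in> F_fam 0 (cube c r) c"
  using centre_in_cube[of r c] by (auto simp: F_fam_def is_cube_def)

lemma grid_cell_in_F_fam:
  fixes c :: "'a::euclidean_space"
  assumes s: "s > 0" and j: "j \<in> shell_indices N" and r: "(real N + 1) * s \<le> r"
  shows "grid_cell c s j \<in> F_fam N (cube c r) c"
proof -
  from j obtain b where j_box: "j \<in> Basis \<rightarrow>\<^sub>E {-(int N + 1)..int N}"
    and b: "b \<in> Basis" "j b = int N \<or> j b = -(int N + 1)"
    by (auto simp: shell_indices_def)
  have diam: "diameter (grid_cell c s j) = s * sqrt DIM('a)"
    using s by (simp add: grid_cell_def diameter_cube)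
  show ?thesis
    unfolding F_fam_def mem_Collect_eq
  proof (intro conjI)
    show "is_cube (grid_cell c s j)"
      unfolding is_cube_def grid_cell_def by (blast intro: half_gt_zero[OF s])
    show "grid_cell c s j \<subseteq> cube c r"
      using s j_box r by (rule grid_cell_subset_cube)
    show "real N / sqrt DIM('a) * diameter (grid_cell c s j) \<le> infdist c (grid_cell c s j)"
      using infdist_grid_cell_ge[of s b j N c, OF s b] by (simp add: diam)
    show "infdist c (grid_cell c s j) \<le> real N * diameter (grid_cell c s j)"
      using infdist_grid_cell_le[OF s j_box, of c] by (simp add: diam algebra_simps)
  qed
qed

lemma clamped_floor_bounds:
  fixes y :: real
  assumes y: "\<bar>y\<bar> \<le> real N + 1"
  defines "i \<equiv> min (int N) \<lfloor>y\<rfloor>"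
  shows "i \<in> {-(int N + 1)..int N}" and "of_int i \<le> y" and "y \<le> of_int i + 1"
    and "real N < \<bar>y\<bar> \<Longrightarrow> i = int N \<or> i = -(int N + 1)"
proof -
  show "i \<in> {-(int N + 1)..int N}"
    using y by (simp add: i_def le_floor_iff)
  show "of_int i \<le> y"
    by (simp add: i_def min_def) linarith
  show "y \<le> of_int i + 1"
    using y by (simp add: i_def min_def) linarith
  show "i = int N \<or> i = -(int N + 1)" if "real N < \<bar>y\<bar>"
  proof (cases "y \<ge> 0")
    case True
    then have "int N \<le> \<lfloor>y\<rfloor>"
      using that by (simp add: le_floor_iff)
    then show ?thesis
      by (simp add: i_def)
  next
    case False
    then have "\<lfloor>y\<rfloor> < - int N" "-(int N + 1) \<le> \<lfloor>y\<rfloor>"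
      using that y by (simp_all add: floor_less_iff le_floor_iff)
    then show ?thesis
      by (simp add: i_def)
  qed
qed

lemma shell_point_in_grid_cell:
  fixes c x :: "'a::euclidean_space"
  assumes s: "s > 0"
    and lo: "real N * s < infnorm (x - c)" and hi: "infnorm (x - c) \<le> (real N + 1) * s"
  shows "\<exists>j\<in>shell_indices N. x \<in> grid_cell c s j"
proof -
  define y where "y b = (x - c) \<bullet> b / s" for b
  define j where "j = restrict (\<lambda>b. min (int N) \<lfloor>y b\<rfloor>) Basis"
  have xy: "(x - c) \<bullet> b = s * y b" for b
    using s by (simp add: y_def)
  have y_bound: "\<bar>y b\<bar> \<le> real N + 1" if "b \<in> Basis" for b
  proof -
    have "s * \<bar>y b\<bar> \<le> infnorm (x - c)"
      using Basis_le_infnorm[OF that, of "x - c"] s by (simp add: xy abs_mult)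
    then have "s * \<bar>y b\<bar> \<le> s * (real N + 1)"
      using hi by (simp add: mult.commute)
    then show ?thesis
      using s by simp
  qed
  have j_box: "j \<in> Basis \<rightarrow>\<^sub>E {-(int N + 1)..int N}"
    using clamped_floor_bounds(1)[OF y_bound] by (simp add: PiE_iff j_def)
  have x_in: "x \<in> grid_cell c s j"
    using s clamped_floor_bounds(2,3)[OF y_bound] by (simp add: mem_grid_cell xy j_def)
  have "infnorm (x - c) \<in> (\<lambda>i. \<bar>(x - c) \<bullet> i\<bar>) ` Basis"
    unfolding infnorm_Max by (rule Max_in) auto
  then obtain b where b: "b \<in> Basis" "infnorm (x - c) = \<bar>(x - c) \<bullet> b\<bar>"
    by auto
  have "real N < \<bar>y b\<bar>"
    using lo b(2) s by (simp add: xy abs_mult mult.commute)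
  then have "j b = int N \<or> j b = -(int N + 1)"
    using clamped_floor_bounds(4)[OF y_bound[OF b(1)]] b(1) by (simp add: j_def)
  then show ?thesis
    using j_box b(1) x_in by (auto simp: shell_indices_def)
qed

lemma cube_covered_by_shell_cells:
  fixes c x :: "'a::euclidean_space"
  assumes N: "N \<ge> 1" and x: "x \<in> cube c r" "x \<noteq> c"
  shows "\<exists>k. \<exists>j\<in>shell_indices N. x \<in> grid_cell c (r * (real N / (real N + 1)) ^ k / (real N + 1)) j"
proof -
  let ?q = "real N / (real N + 1)"
  have pos: "0 < infnorm (x - c)"
    using x(2) by (simp add: infnorm_pos_lt)
  moreover have le: "infnorm (x - c) \<le> r"
    using x(1) unfolding infnorm_Max by (auto simp: mem_cube intro!: Max.boundedI)
  moreover have q: "0 < ?q" "?q < 1"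
    using N by auto
  ultimately obtain k where k: "r * ?q ^ Suc k < infnorm (x - c)" "infnorm (x - c) \<le> r * ?q ^ k"
    using geometric_shell by blast
  define s where "s = r * ?q ^ k / (real N + 1)"
  have "s > 0"
    using pos le q by (simp add: s_def)
  moreover have "real N * s = r * ?q ^ Suc k"
    by (simp add: s_def field_simps)
  moreover have "(real N + 1) * s = r * ?q ^ k"
    by (simp add: s_def)
  ultimately have "s > 0" "real N * s < infnorm (x - c)" "infnorm (x - c) \<le> (real N + 1) * s"
    using k by simp_all
  then show ?thesis
    using shell_point_in_grid_cell unfolding s_def by blast
qed

lemma set_nn_integral_le_SUP_morrey_avg:
  assumes "R \<in> F" "0 < measure lebesgue R"
  shows "(\<integral>\<^sup>+x\<in>R. ennreal (\<bar>f x\<bar> powr p * w x) \<partial>lebesgue)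
    \<le> ennreal (measure lebesgue R powr lam) * (SUP R\<in>F. morrey_avg lam p f w R)"
proof -
  have "(\<integral>\<^sup>+x\<in>R. ennreal (\<bar>f x\<bar> powr p * w x) \<partial>lebesgue)
      = ennreal (measure lebesgue R powr lam) * morrey_avg lam p f w R"
    using assms(2) by (simp add: morrey_avg_def mult.assoc[symmetric] ennreal_mult''[symmetric])
  also have "\<dots> \<le> ennreal (measure lebesgue R powr lam) * (SUP R\<in>F. morrey_avg lam p f w R)"
    using assms(1) by (intro mult_left_mono SUP_upper) auto
  finally show ?thesis .
qed

lemma sum_shell_cells_le_SUP_morrey_avg:
  fixes c :: "'a::euclidean_space" and lam :: real
  assumes s: "s > 0" and r: "(real N + 1) * s \<le> r"
  shows "(\<Sum>j\<in>shell_indices N. \<integral>\<^sup>+x\<in>grid_cell c s j. ennreal (\<bar>f x\<bar> powr p * w x) \<partial>lebesgue)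
    \<le> ennreal ((2 * (real N + 1)) ^ DIM('a) * s powr (DIM('a) * lam))
        * (SUP R\<in>F_fam N (cube c r) c. morrey_avg lam p f w R)"
    (is "?S \<le> ennreal (?K * ?m) * ?M")
proof -
  have cell_bound: "(\<integral>\<^sup>+x\<in>grid_cell c s j. ennreal (\<bar>f x\<bar> powr p * w x) \<partial>lebesgue) \<le> ennreal ?m * ?M"
    if j: "j \<in> shell_indices N" for j
  proof -
    have in_F: "grid_cell c s j \<in> F_fam N (cube c r) c"
      using s j r by (rule grid_cell_in_F_fam)
    have pos: "0 < measure lebesgue (grid_cell c s j)"
      using s by (simp add: measure_grid_cell)
    have "measure lebesgue (grid_cell c s j) powr lam = ?m"
      using s by (simp add: measure_grid_cell powr_realpow[symmetric] powr_powr)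
    with set_nn_integral_le_SUP_morrey_avg[OF in_F pos, where lam = lam and f = f and p = p and w = w]
    show ?thesis
      by simp
  qed
  have "?S \<le> (\<Sum>j::'a \<Rightarrow> int\<in>shell_indices N. ennreal ?m * ?M)"
    by (intro sum_mono cell_bound)
  also have "\<dots> = of_nat (card (shell_indices N :: ('a \<Rightarrow> int) set)) * (ennreal ?m * ?M)"
    by simp
  also have "\<dots> \<le> ennreal (?K * ?m) * ?M"
    using card_shell_indices_le[where 'a='a, of N]
    by (simp add: ennreal_mult'' ennreal_of_nat_eq_real_of_nat mult.assoc[symmetric] mult_right_mono)
  finally show ?thesis .
qed

lemma set_nn_integral_cube_le_shell_sum:
  fixes c :: "'a::euclidean_space" and lam :: real
  assumes N: "N \<ge> 1" and r: "r > 0" and w: "locally_integrable w" and f: "f \<in> borel_measurable lebesgue"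
  defines "s \<equiv> \<lambda>k. r * (real N / (real N + 1)) ^ k / (real N + 1)"
  shows "(\<integral>\<^sup>+x\<in>cube c r. ennreal (\<bar>f x\<bar> powr p * w x) \<partial>lebesgue)
    \<le> (\<Sum>k. ennreal ((2 * (real N + 1)) ^ DIM('a) * s k powr (DIM('a) * lam))
              * (SUP R\<in>F_fam N (cube c r) c. morrey_avg lam p f w R))"
    (is "?I \<le> _")
proof -
  let ?g = "\<lambda>x. ennreal (\<bar>f x\<bar> powr p * w x)"
  have s: "s k > 0" for k
    using N r by (simp add: s_def)
  have "?I \<le> (\<Sum>k. \<Sum>j\<in>shell_indices N. \<integral>\<^sup>+x\<in>grid_cell c (s k) j. ?g x \<partial>lebesgue)"
  proof (rule set_nn_integral_le_suminf_cover)
    show "?g \<in> borel_measurable lebesgue"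
      using f locally_integrable_borel_measurable[OF w] by measurable
    show "grid_cell c (s k) j \<in> sets lebesgue" for k j
      unfolding grid_cell_def cube_def by (rule fmeasurableD[OF lmeasurable_cbox])
    have "AE x in lebesgue. x \<noteq> c"
      by (rule AE_completion[OF AE_lborel_singleton])
    then show "AE x in lebesgue. x \<in> cube c r \<longrightarrow> (\<exists>k. \<exists>j\<in>shell_indices N. x \<in> grid_cell c (s k) j)"
      by eventually_elim (use cube_covered_by_shell_cells[OF N] in \<open>auto simp: s_def\<close>)
  qed (rule finite_shell_indices)
  also have "\<dots> \<le> (\<Sum>k. ennreal ((2 * (real N + 1)) ^ DIM('a) * s k powr (DIM('a) * lam))
              * (SUP R\<in>F_fam N (cube c r) c. morrey_avg lam p f w R))"
  proof (intro suminf_le summableI sum_shell_cells_le_SUP_morrey_avg s)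
    show "(real N + 1) * s k \<le> r" for k
      using N r by (simp add: s_def power_le_one)
  qed
  finally show ?thesis .
qed

definition morrey_shell_const :: "real \<Rightarrow> nat \<Rightarrow> nat \<Rightarrow> real" where
  "morrey_shell_const lam N n =
    (2 * (real N + 1)) powr (real n * (1 - lam)) / (1 - (real N / (real N + 1)) powr (real n * lam))"

lemma morrey_shell_const_pos:
  assumes "N \<ge> 1" "0 < lam" "0 < n"
  shows "0 < morrey_shell_const lam N n"
proof -
  have "(real N / (real N + 1)) powr (real n * lam) < 1 powr (real n * lam)"
    using assms by (intro powr_less_mono2) auto
  then show ?thesis
    by (simp add: morrey_shell_const_def)
qed

lemma morrey_shell_const_eq:
  assumes r: "r > 0"
  shows "1 / (2 * r) powr (real n * lam) *
      ((2 * (real N + 1)) ^ n * (r / (real N + 1)) powr (real n * lam)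
        / (1 - (real N / (real N + 1)) powr (real n * lam)))
    = morrey_shell_const lam N n"
proof -
  let ?e = "real n * lam" and ?B = "2 * (real N + 1)"
  have "r / (real N + 1) / (2 * r) = 1 / ?B"
    using r by (simp add: divide_divide_eq_left)
  then have "(r / (real N + 1)) powr ?e / (2 * r) powr ?e = 1 / ?B powr ?e"
    by (metis powr_divide powr_one_eq_one)
  then have "?B ^ n * (r / (real N + 1)) powr ?e / (2 * r) powr ?e = ?B ^ n / ?B powr ?e"
    by (simp only: times_divide_eq_right[symmetric]) simp
  also have "\<dots> = ?B powr real n / ?B powr ?e"
    by (simp add: powr_realpow)
  also have "\<dots> = ?B powr (real n * (1 - lam))"
    by (simp add: powr_diff[symmetric] algebra_simps)
  finally show ?thesis
    by (simp add: morrey_shell_const_def)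
qed

lemma morrey_avg_cube_le_SUP_F_fam:
  fixes c :: "'a::euclidean_space" and lam :: real
  assumes N: "N \<ge> 1" and lam: "0 < lam" and r: "r > 0"
    and w: "locally_integrable w" and f: "f \<in> borel_measurable lebesgue"
  shows "morrey_avg lam p f w (cube c r)
    \<le> ennreal (morrey_shell_const lam N DIM('a)) * (SUP R\<in>F_fam N (cube c r) c. morrey_avg lam p f w R)"
    (is "_ \<le> _ * ?M")
proof -
  let ?e = "real DIM('a) * lam" and ?q = "real N / (real N + 1)" and ?B = "2 * (real N + 1)"
  define t where "t = ?q powr ?e"
  define a where "a = ?B ^ DIM('a) * (r / (real N + 1)) powr ?e"
  have q: "0 < ?q" "?q < 1"
    using N by auto
  have t: "0 \<le> t" "t < 1"
    using q lam powr_less_mono2[of ?e ?q 1] by (auto simp: t_def)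
  have a0: "0 \<le> a"
    using r by (simp add: a_def)
  have shell_term: "?B ^ DIM('a) * (r * ?q ^ k / (real N + 1)) powr ?e = a * t ^ k" for k
  proof -
    have "?q \<noteq> 0"
      using N by simp
    then have "(?q ^ k) powr ?e = t ^ k"
      using q by (simp add: t_def powr_power powr_realpow[symmetric] powr_powr mult.commute)
    then show ?thesis
      using r q by (simp add: a_def powr_mult powr_divide mult_ac)
  qed
  have "0 < 2 * r"
    using r by simp
  then have "measure lebesgue (cube c r) powr lam = (2 * r) powr ?e"
    by (simp only: measure_cube[OF r] powr_realpow[symmetric] powr_powr)
  then have "morrey_avg lam p f w (cube c r)
      = ennreal (1 / (2 * r) powr ?e) * (\<integral>\<^sup>+x\<in>cube c r. ennreal (\<bar>f x\<bar> powr p * w x) \<partial>lebesgue)"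
    by (simp add: morrey_avg_def)
  also have "\<dots> \<le> ennreal (1 / (2 * r) powr ?e) * (\<Sum>k. ennreal (a * t ^ k) * ?M)"
    using set_nn_integral_cube_le_shell_sum[OF N r w f, where c = c and p = p and lam = lam]
    unfolding shell_term by (rule mult_left_mono) simp
  also have "\<dots> = ennreal (1 / (2 * r) powr ?e) * (ennreal (a / (1 - t)) * ?M)"
    unfolding ennreal_suminf_multc suminf_ennreal_geometric[OF a0 t] ..
  also have "\<dots> = ennreal (1 / (2 * r) powr ?e * (a / (1 - t))) * ?M"
    using a0 t by (subst ennreal_mult) (auto simp: mult.assoc)
  also have "1 / (2 * r) powr ?e * (a / (1 - t)) = morrey_shell_const lam N DIM('a)"
    unfolding a_def t_def by (rule morrey_shell_const_eq[OF r])
  finally show ?thesis .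
qed

theorem lemma3p2:
  fixes lam :: real and N :: nat
  assumes "0 < lam" "lam < 1"
  shows "\<exists>C::real. C > 0 \<and>
    (\<forall>(p::real) (w::'a::euclidean_space \<Rightarrow> real) (f::'a \<Rightarrow> real) (c::'a) (r::real).
       p > 1 \<longrightarrow> (\<forall>x. 0 \<le> w x) \<longrightarrow> locally_integrable w \<longrightarrow>
       f \<in> borel_measurable lebesgue \<longrightarrow> r > 0 \<longrightarrow>
       morrey_avg lam p f w (cube c r)
         \<le> ennreal C * (SUP R \<in> F_fam N (cube c r) c. morrey_avg lam p f w R))"
proof (cases "N = 0")
  case True
  then show ?thesis
    by (auto intro!: exI[of _ 1] SUP_upper cube_in_F_fam_zero)
next
  case False
  then have N: "N \<ge> 1"
    by simp
  show ?thesis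
    using morrey_shell_const_pos[OF N assms(1)] morrey_avg_cube_le_SUP_F_fam[OF N assms(1)]
    by (intro exI[of _ "morrey_shell_const lam N DIM('a)"]) auto
qed

end
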